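(* Consider the algorithm CCom described in the context. Then the fraction of bad IDs in the system is always at most $1/2$.
   Context: Model. IDs are good (follow the algorithm) or bad (controlled by a single adversary, which schedules joins and departures). The adversary controls at most an $\alpha\le1/6$ fraction of total computational power. Good IDs announce their departures; bad IDs need not. A committee (assumed to have a good majority and to act correctly via Byzantine consensus) runs the algorithm. Algorithm CCom. The committee maintains $\mathcal S_{\mathrm{old}}$ (IDs present after the most recent purge) and $\mathcal S$ (current IDs: joining IDs are added after solving an entrance puzzle, announced departures are removed). Whenever $|(\mathcal S\cup\mathcal S_{\mathrm{old}})\setminus(\mathcal S\cap\mathcal S_{\mathrm{old}})|\ge|\mathcal S_{\mathrm{old}}|/3$, a purge occurs: a fresh random string is broadcast and every ID must return within one round a solution to a $1$-round computational puzzle whose inputs include its public key and that string; IDs failing to do so are removed, and $\mathcal S_{\mathrm{old}},\mathcal S$ are reset to the IDs returning valid solutions. Epochs are the periods between consecutive purges. Initially fewer than a third of the IDs are bad, and at the end of every epoch the number of bad IDs is less than a third of all IDs. *)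

theory Defs
  imports Main
begin

(* State of the system under CCom: (S_old, S, P) where
   S_old = IDs present after the most recent purge (committee's view),
   S     = current IDs in the committee's view,
   P     = IDs actually present in the system.
   B is the (fixed) set of bad IDs; good IDs are those outside B. *)
type_synonym 'a ccom_state = "'a set \<times> 'a set \<times> 'a set"

definition purge_trigger :: "'a set \<Rightarrow> 'a set \<Rightarrow> bool" where
  "purge_trigger Sold S \<longleftrightarrow> 3 * card ((S \<union> Sold) - (S \<inter> Sold)) \<ge> card Sold"

(* In a purge, R is the set of IDs returning valid puzzle solutions: R \<subseteq> S,
   every good ID actually present solves the puzzle, and (standing assumption)
   at the end of every epoch fewer than a third of the IDs are bad. *)
inductive ccom_settle :: "'a set \<Rightarrow> 'a ccom_state \<Rightarrow> 'a ccom_state \<Rightarrow> bool"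
  for B :: "'a set" where
  no_purge: "\<not> purge_trigger Sold S \<Longrightarrow> ccom_settle B (Sold, S, P) (Sold, S, P)"
| purge: "purge_trigger Sold S \<Longrightarrow> R \<subseteq> S \<Longrightarrow> P - B \<subseteq> R \<Longrightarrow>
          3 * card (B \<inter> R) < card R \<Longrightarrow> ccom_settle B (Sold, S, P) (R, R, R)"

inductive ccom_reach :: "'a set \<Rightarrow> 'a set \<Rightarrow> 'a ccom_state \<Rightarrow> bool"
  for B :: "'a set" and S0 :: "'a set" where
  init: "ccom_reach B S0 (S0, S0, S0)"
| join: "ccom_reach B S0 (Sold, S, P) \<Longrightarrow> x \<notin> P \<Longrightarrow>
         ccom_settle B (Sold, insert x S, insert x P) st \<Longrightarrow> ccom_reach B S0 st"
| announced_depart: "ccom_reach B S0 (Sold, S, P) \<Longrightarrow> x \<in> P \<Longrightarrow>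
         ccom_settle B (Sold, S - {x}, P - {x}) st \<Longrightarrow> ccom_reach B S0 st"
| silent_depart: "ccom_reach B S0 (Sold, S, P) \<Longrightarrow> x \<in> P \<Longrightarrow> x \<in> B \<Longrightarrow>
         ccom_reach B S0 (Sold, S, P - {x})"

end

theory Submission
  imports Defs
begin

text \<open>Between two purges the committee's view S differs from S_old in fewer than
  |S_old|/3 IDs, and fewer than |S_old|/3 of S_old are bad. Hence at most
  b + |S - S_old| IDs of S are bad while at least |S_old| - b - |S_old - S| are good,
  where b < |S_old|/3 counts the bad IDs of S_old; since 2b + |S - S_old| + |S_old - S|
  < |S_old|, the good IDs are in the majority. The IDs actually present differ from S
  only by silently departed bad IDs, which can only help. A purge restarts the epoch
  with fewer than a third bad IDs.\<close>

lemma card_sym_diff: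
  assumes "finite S" "finite T"
  shows "card ((S \<union> T) - (S \<inter> T)) = card (S - T) + card (T - S)"
proof -
  have "(S \<union> T) - (S \<inter> T) = (S - T) \<union> (T - S)" by auto
  then show ?thesis using assms by (simp only:) (rule card_Un_disjoint; auto)
qed

lemma card_split_by:
  assumes "finite A"
  shows "card A = card (B \<inter> A) + card (A - B)"
  using card_Int_Diff[OF assms, of B] by (simp add: Int_commute)

lemma good_majority_of_small_change:
  assumes "finite Sold" "finite S" "P \<subseteq> S" "S - P \<subseteq> B"
    and few_bad: "3 * card (B \<inter> Sold) < card Sold"
    and small_change: "3 * card ((S \<union> Sold) - (S \<inter> Sold)) < card Sold"
  shows "2 * card (B \<inter> P) \<le> card P"
proof -
  have "finite P" using assms(2,3) finite_subset by blast
  have "card (B \<inter> P) \<le> card (B \<inter> S)"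
    using assms(2,3) by (intro card_mono) auto
  also have "\<dots> \<le> card ((B \<inter> Sold) \<union> (S - Sold))"
    using assms(1,2) by (intro card_mono) auto
  also have "\<dots> \<le> card (B \<inter> Sold) + card (S - Sold)" by (rule card_Un_le)
  finally have bad_P: "card (B \<inter> P) \<le> card (B \<inter> Sold) + card (S - Sold)" .
  have "card (Sold - B) \<le> card ((P - B) \<union> (Sold - S))"
    using assms(1,4) \<open>finite P\<close> by (intro card_mono) auto
  also have "\<dots> \<le> card (P - B) + card (Sold - S)" by (rule card_Un_le)
  finally have good_Sold: "card (Sold - B) \<le> card (P - B) + card (Sold - S)" .
  have "card ((S \<union> Sold) - (S \<inter> Sold)) = card (S - Sold) + card (Sold - S)"
    using card_sym_diff[OF assms(2,1)] .
  moreover have "card Sold = card (B \<inter> Sold) + card (Sold - B)"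
    using card_split_by[OF assms(1)] .
  moreover have "card P = card (B \<inter> P) + card (P - B)"
    using card_split_by[OF \<open>finite P\<close>] .
  ultimately show ?thesis
    using bad_P good_Sold few_bad small_change by linarith
qed

definition ccom_invariant :: "'a set \<Rightarrow> 'a ccom_state \<Rightarrow> bool" where
  "ccom_invariant B st \<longleftrightarrow> (case st of (Sold, S, P) \<Rightarrow>
     finite Sold \<and> finite S \<and> P \<subseteq> S \<and> S - P \<subseteq> B \<and>
     3 * card (B \<inter> Sold) < card Sold \<and> \<not> purge_trigger Sold S)"

lemma ccom_invariant_bad_fraction:
  assumes "ccom_invariant B (Sold, S, P)"
  shows "2 * card (B \<inter> P) \<le> card P"
proof (rule good_majority_of_small_change)
  show "finite Sold" "finite S" "P \<subseteq> S" "S - P \<subseteq> B" "3 * card (B \<inter> Sold) < card Sold"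
    "3 * card ((S \<union> Sold) - (S \<inter> Sold)) < card Sold"
    using assms by (simp_all add: ccom_invariant_def purge_trigger_def not_le)
qed

lemma ccom_settle_invariant:
  assumes "ccom_settle B (Sold, S, P) st" "finite Sold" "finite S" "P \<subseteq> S" "S - P \<subseteq> B"
    "3 * card (B \<inter> Sold) < card Sold"
  shows "ccom_invariant B st"
  using assms(1)
proof cases
  case no_purge
  then show ?thesis using assms by (simp add: ccom_invariant_def)
next
  case (purge R)
  have "finite R" using purge assms(3) finite_subset by blast
  moreover have "R \<noteq> {}" using purge by auto
  ultimately show ?thesis using purge by (simp add: ccom_invariant_def purge_trigger_def)
qed

lemma ccom_reach_invariant:
  assumes "ccom_reach B S0 st" "finite S0" "3 * card (B \<inter> S0) < card S0"
  shows "ccom_invariant B st"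
  using assms(1)
proof induction
  case init
  have "S0 \<noteq> {}" using assms(3) by auto
  then show ?case using assms(2,3) by (simp add: ccom_invariant_def purge_trigger_def)
next
  case (join Sold S P x st)
  show ?case
    by (rule ccom_settle_invariant[OF join(3)])
      (use join(2,4) in \<open>auto simp: ccom_invariant_def\<close>)
next
  case (announced_depart Sold S P x st)
  show ?case
    by (rule ccom_settle_invariant[OF announced_depart(3)])
      (use announced_depart(4) in \<open>auto simp: ccom_invariant_def\<close>)
next
  case (silent_depart Sold S P x)
  then show ?case by (auto simp: ccom_invariant_def)
qed

theorem lemma3:
  fixes B S0 :: "'a set"
  assumes "finite S0"
    and "3 * card (B \<inter> S0) < card S0"
    and "ccom_reach B S0 (Sold, S, P)"
  shows "2 * card (B \<inter> P) \<le> card P"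
  using ccom_invariant_bad_fraction ccom_reach_invariant[OF assms(3,1,2)] by blast

end
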